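(* Let $\kappa$ and $\lambda$ be infinite cardinals with $\kappa^{<\lambda}=\kappa\geq\lambda$, and let $P$ be the set of all partial functions from $\kappa$ to $\kappa$ of cardinality less than $\lambda$. Let $d\geq1$ and let $\kappa_1,\dots,\kappa_d$ be cardinals such that $\kappa_1=\kappa^+$ and, for every $i<d$, there is a cardinal $\mu_i\geq 2^{\kappa_i}$ with $\kappa_{i+1}=\mu_i^+$ and $\mu_i^{\kappa_i}=\mu_i$. Then for every function $p:\kappa_1\times\cdots\times\kappa_d\to P$ there exist stationary sets $\kappa_1'\subseteq\kappa_1,\dots,\kappa_d'\subseteq\kappa_d$ such that $\bigcup p[\kappa_1'\times\cdots\times\kappa_d']$ is a function.
   Context: Partial functions are identified with their graphs; $p[A]$ denotes the image $\{p(x):x\in A\}$. A subset of a regular uncountable cardinal $\nu$ is stationary if it meets every closed unbounded subset of $\nu$. $\kappa^{<\lambda}=\sup_{\nu<\lambda}\kappa^\nu$. *)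

theory Defs
  imports Main "HOL-Library.FuncSet"
begin

text \<open>Ordinals are represented by elements of a well-ordered type; the ordinal
  (von Neumann set) denoted by an element c is its initial segment seg c.\<close>

definition seg :: "'a::wellorder \<Rightarrow> 'a set" where
  "seg c = {x. x < c}"

definition is_cardinal :: "'a::wellorder \<Rightarrow> bool" where
  "is_cardinal c \<longleftrightarrow> (\<forall>d<c. \<not> (\<exists>f. bij_betw f (seg d) (seg c)))"

definition is_succ_card :: "'a::wellorder \<Rightarrow> 'a \<Rightarrow> bool" where
  "is_succ_card c k \<longleftrightarrow> is_cardinal c \<and>
     (card_of (seg c), cardSuc (card_of (seg k))) \<in> ordIso"

definition club :: "'a::wellorder \<Rightarrow> 'a set \<Rightarrow> bool" where
  "club k C \<longleftrightarrow> C \<subseteq> seg k \<and>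
     (\<forall>\<alpha><k. \<exists>\<beta>\<in>C. \<alpha> < \<beta>) \<and>
     (\<forall>\<gamma><k. ((\<exists>\<beta>\<in>C. \<beta> < \<gamma>) \<and> (\<forall>\<alpha><\<gamma>. \<exists>\<beta>\<in>C. \<alpha> < \<beta> \<and> \<beta> < \<gamma>)) \<longrightarrow> \<gamma> \<in> C)"

definition stationary :: "'a::wellorder \<Rightarrow> 'a set \<Rightarrow> bool" where
  "stationary k S \<longleftrightarrow> S \<subseteq> seg k \<and> (\<forall>C. club k C \<longrightarrow> S \<inter> C \<noteq> {})"

definition small_partial_functions :: "'a::wellorder \<Rightarrow> 'a \<Rightarrow> ('a \<times> 'a) set set" where
  "small_partial_functions kap lam =
     {f. f \<subseteq> seg kap \<times> seg kap \<and> single_valued f \<and>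
         (card_of f, card_of (seg lam)) \<in> ordLess}"

end

theory Submission
  imports Defs
begin

text \<open>In fact p is constant on a product of stationary sets. Put mu_0 = kappa, so that
  kappa_i = mu_(i-1)^+ for all i. Since kappa^(<lambda) = kappa, the set P has at most kappa
  elements. A successor cardinal nu^+ is regular, so any nu many clubs of nu^+ have a common
  point, and hence every function on nu^+ with at most nu values is constant on a stationary
  set. Induct on the number of coordinates: for beta < kappa_(n+1), the section
  x \<mapsto> p(x, beta) on kappa_1 \<times> ... \<times> kappa_n ranges over a set of size at most
  mu_n^kappa_n = mu_n (at most |P| \<le> kappa = mu_0 when n = 0), so it is the same section for
  all beta in a stationary set, and the induction hypothesis applies to that section.\<close>

unbundle cardinal_syntax

lemma card_of_Func_ordLeq:
  assumes "|A'| \<le>o |A|" and "|B'| \<le>o |B|" and "A' = {} \<Longrightarrow> A = {}"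
  shows "|Func A' B'| \<le>o |Func A B|"
  using cexp_mono'[of "|B'|" "|B|" "|A'|" "|A|"] assms by (simp add: cexp_def Field_card_of)

lemma card_of_Func_singleton_dom: "|Func {a} B| =o |B|"
proof -
  have "bij_betw (\<lambda>f. f a) (Func {a} B) B"
  proof (rule bij_betwI[where g = "\<lambda>b x. if x = a then b else undefined"])
    show "(\<lambda>x. if x = a then f a else undefined) = f" if "f \<in> Func {a} B" for f
      using that by (auto simp: Func_def)
  qed (auto simp: Func_def)
  then show ?thesis
    using card_of_ordIso by blast
qed

lemma card_of_PiE_ordLeq_infinite:
  assumes "finite I" and "infinite B" and "\<And>i. i \<in> I \<Longrightarrow> |F i| \<le>o |B|"
  shows "|PiE I F| \<le>o |B|"
  using assms
proof (induction I rule: finite_induct)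
  case empty
  have "B \<noteq> {}"
    using \<open>infinite B\<close> by auto
  then show ?case
    by (simp add: card_of_singl_ordLeq)
next
  case (insert i I)
  have "|PiE (insert i I) F| \<le>o |F i \<times> PiE I F|"
    unfolding PiE_insert_eq by (rule card_of_image)
  also have "|F i \<times> PiE I F| \<le>o |B|"
    using insert by (intro card_of_Times_ordLeq_infinite_Field)
      (simp_all add: Field_card_of card_of_card_order_on)
  finally show ?case .
qed

lemma card_of_ordLeq_chain:
  fixes X :: "nat \<Rightarrow> 'b set"
  assumes "\<And>i. a \<le> i \<Longrightarrow> i < b \<Longrightarrow> |X i| \<le>o |X (Suc i)|" and "a \<le> b"
  shows "|X a| \<le>o |X b|"
  using assms(2,1)
proof (induction b rule: dec_induct)
  case base
  show ?case
    by (rule ordLeq_refl[OF card_of_Card_order])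
next
  case (step b)
  then show ?case
    using ordLeq_transitive by (metis less_Suc_eq)
qed

lemma is_succ_card_seg_ordLess: "is_succ_card c m \<Longrightarrow> |seg m| <o |seg c|"
  unfolding is_succ_card_def
  using cardSuc_greater[OF card_of_Card_order] ordLess_ordIso_trans ordIso_symmetric by blast

lemma club_contains_limit:
  assumes C: "club K C" and "\<gamma> < K"
    and below: "\<And>n. s n < \<gamma>" and cofinal: "\<And>\<alpha>. \<alpha> < \<gamma> \<Longrightarrow> \<exists>n. \<alpha> \<le> s n"
    and interleaved: "\<And>n. \<exists>c\<in>C. s n < c \<and> c < s (Suc n)"
  shows "\<gamma> \<in> C"
proof -
  have "\<exists>\<beta>\<in>C. \<alpha> < \<beta> \<and> \<beta> < \<gamma>" if lt: "\<alpha> < \<gamma>" for \<alpha>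
  proof -
    obtain n where "\<alpha> \<le> s n"
      using cofinal[OF lt] by blast
    moreover obtain c where "c \<in> C" "s n < c" "c < s (Suc n)"
      using interleaved by blast
    ultimately show ?thesis
      using below[of "Suc n"] by (meson le_less_trans less_trans)
  qed
  moreover have "\<exists>\<beta>\<in>C. \<beta> < \<gamma>"
    using interleaved[of 0] below[of "Suc 0"] by (meson less_trans)
  ultimately show ?thesis
    using C \<open>\<gamma> < K\<close> unfolding club_def by blast
qed

lemma club_subset_seg: "club K C \<Longrightarrow> C \<subseteq> seg K"
  by (simp add: club_def)

lemma club_unbounded: "club K C \<Longrightarrow> \<alpha> < K \<Longrightarrow> \<exists>\<beta>\<in>C. \<alpha> < \<beta>"
  by (simp add: club_def)

locale successor_cardinal =
  fixes K :: "'a::wellorder" and A :: "'b set"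
  assumes cardinal: "is_cardinal K"
    and seg_ordIso: "|seg K| =o cardSuc |A|"
    and infinite_pred: "infinite A"
begin

lemma pred_ordLess_seg: "|A| <o |seg K|"
  using cardSuc_greater[OF card_of_Card_order] seg_ordIso ordLess_ordIso_trans ordIso_symmetric
  by blast

lemma infinite_seg: "infinite (seg K)"
  using card_of_ordLeq_infinite[OF ordLess_imp_ordLeq[OF pred_ordLess_seg] infinite_pred] .

lemma seg_below_ordLeq:
  assumes "b < K"
  shows "|seg b| \<le>o |A|"
proof (rule ccontr)
  assume "\<not> |seg b| \<le>o |A|"
  then have "|A| <o |seg b|"
    using not_ordLeq_iff_ordLess[OF card_of_Well_order card_of_Well_order] by blast
  then have "cardSuc |A| \<le>o |seg b|"
    by (rule cardSuc_least[OF card_of_Card_order card_of_Card_order])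
  then have "|seg K| \<le>o |seg b|"
    by (rule ordIso_ordLeq_trans[OF seg_ordIso])
  moreover have "|seg b| \<le>o |seg K|"
    using assms by (intro card_of_mono1) (auto simp: seg_def)
  ultimately have "|seg b| =o |seg K|"
    by (simp add: ordIso_iff_ordLeq)
  then have "\<exists>f. bij_betw f (seg b) (seg K)"
    using card_of_ordIso by blast
  with cardinal assms show False
    unfolding is_cardinal_def by blast
qed

lemma small_subset_bounded:
  assumes B: "B \<subseteq> seg K" and card_B: "|B| \<le>o |A|"
  shows "\<exists>\<beta><K. \<forall>b\<in>B. b < \<beta>"
proof (rule ccontr)
  assume unbounded: "\<not> ?thesis"
  have "seg K \<subseteq> B \<union> (\<Union>b\<in>B. seg b)"
  proof
    fix x assume "x \<in> seg K"
    with unbounded obtain b where "b \<in> B" "x \<le> b"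
      by (metis mem_Collect_eq not_less seg_def)
    then show "x \<in> B \<union> (\<Union>b\<in>B. seg b)"
      by (auto simp: seg_def le_less)
  qed
  moreover have "|\<Union>b\<in>B. seg b| \<le>o |A|"
    using B by (intro card_of_UNION_ordLeq_infinite[OF infinite_pred card_B] ballI seg_below_ordLeq)
      (auto simp: seg_def)
  then have "|B \<union> (\<Union>b\<in>B. seg b)| \<le>o |A|"
    using card_B infinite_pred
    by (intro Un_Cinfinite_bound) (auto simp: cinfinite_def Field_card_of card_of_card_order_on)
  ultimately have "|seg K| \<le>o |A|"
    using card_of_mono1 ordLeq_transitive by blast
  then show False
    using pred_ordLess_seg not_ordLess_ordLeq by blast
qed

lemma club_seg: "club K (seg K)"
  unfolding club_def
proof (intro conjI allI impI)
  fix \<alpha> assume "\<alpha> < K"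
  have "A \<noteq> {}"
    using infinite_pred by auto
  then have "|{\<alpha>}| \<le>o |A|"
    by (rule card_of_singl_ordLeq)
  moreover have "{\<alpha>} \<subseteq> seg K"
    using \<open>\<alpha> < K\<close> by (simp add: seg_def)
  ultimately obtain \<beta> where "\<beta> < K" "\<alpha> < \<beta>"
    using small_subset_bounded by blast
  then show "\<exists>\<beta>\<in>seg K. \<alpha> < \<beta>"
    by (auto simp: seg_def)
qed (auto simp: seg_def)

lemma stationary_nonempty: "stationary K S \<Longrightarrow> S \<noteq> {}"
  using club_seg unfolding stationary_def by blast

lemma countable_sup_below:
  fixes s :: "nat \<Rightarrow> 'a"
  assumes "\<And>n. s n < K"
  obtains \<gamma> where "\<gamma> < K" and "\<And>n. s n < \<gamma>" and "\<And>\<alpha>. \<alpha> < \<gamma> \<Longrightarrow> \<exists>n. \<alpha> \<le> s n"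
proof -
  have "|range s| \<le>o |A|"
    using card_of_image infinite_iff_card_of_nat infinite_pred ordLeq_transitive by blast
  then obtain \<beta> where "\<beta> < K" and \<beta>: "\<forall>n. s n < \<beta>"
    using small_subset_bounded[of "range s"] assms by (auto simp: seg_def)
  define \<gamma> where "\<gamma> = (LEAST \<gamma>. \<forall>n. s n < \<gamma>)"
  show thesis
  proof (rule that)
    show "s n < \<gamma>" for n
      unfolding \<gamma>_def using \<beta> by (rule LeastI2_ex[OF exI]) blast
    show "\<gamma> < K"
      using Least_le[of "\<lambda>\<gamma>. \<forall>n. s n < \<gamma>", OF \<beta>] \<open>\<beta> < K\<close> unfolding \<gamma>_def by simp
    show "\<exists>n. \<alpha> \<le> s n" if "\<alpha> < \<gamma>" for \<alpha>
      using not_less_Least[OF that[unfolded \<gamma>_def]] by (auto simp: not_less)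
  qed
qed

lemma clubs_interleave:
  assumes "J \<noteq> {}" and card_J: "|J| \<le>o |A|" and clubs: "\<And>j. j \<in> J \<Longrightarrow> club K (C j)"
    and "\<alpha> < K"
  shows "\<exists>\<beta><K. \<alpha> < \<beta> \<and> (\<forall>j\<in>J. \<exists>c\<in>C j. \<alpha> < c \<and> c < \<beta>)"
proof -
  have "\<forall>j\<in>J. \<exists>c. c \<in> C j \<and> \<alpha> < c"
    using club_unbounded[OF clubs \<open>\<alpha> < K\<close>] by blast
  from bchoice[OF this] obtain c where c: "\<forall>j\<in>J. c j \<in> C j \<and> \<alpha> < c j"
    by blast
  have "c ` J \<subseteq> seg K"
    using c club_subset_seg[OF clubs] by blast
  moreover have "|c ` J| \<le>o |A|"
    by (rule ordLeq_transitive[OF card_of_image card_J])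
  ultimately obtain \<beta> where "\<beta> < K" and \<beta>: "\<forall>j\<in>J. c j < \<beta>"
    by (blast dest: small_subset_bounded)
  moreover obtain j where "j \<in> J"
    using \<open>J \<noteq> {}\<close> by blast
  then have "\<alpha> < \<beta>"
    using c \<beta> less_trans by blast
  ultimately show ?thesis
    using c by blast
qed

lemma club_Inter_nonempty:
  assumes card_J: "|J| \<le>o |A|" and clubs: "\<And>j. j \<in> J \<Longrightarrow> club K (C j)"
  shows "\<exists>\<gamma><K. \<forall>j\<in>J. \<gamma> \<in> C j"
proof -
  have "seg K \<noteq> {}"
    using infinite_seg by auto
  then obtain \<alpha>\<^sub>0 where "\<alpha>\<^sub>0 < K"
    by (auto simp: seg_def)
  show ?thesis
  proof (cases "J = {}")
    case True
    then show ?thesis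
      using \<open>\<alpha>\<^sub>0 < K\<close> by blast
  next
    case False
    define nxt where "nxt \<alpha> = (SOME \<beta>. \<beta> < K \<and> \<alpha> < \<beta> \<and> (\<forall>j\<in>J. \<exists>c\<in>C j. \<alpha> < c \<and> c < \<beta>))"
      for \<alpha>
    have nxt: "nxt \<alpha> < K \<and> \<alpha> < nxt \<alpha> \<and> (\<forall>j\<in>J. \<exists>c\<in>C j. \<alpha> < c \<and> c < nxt \<alpha>)"
      if "\<alpha> < K" for \<alpha>
      unfolding nxt_def by (rule someI_ex[OF clubs_interleave[OF False card_J clubs that]])
    define s where "s n = (nxt ^^ n) \<alpha>\<^sub>0" for n
    have s_Suc: "s (Suc n) = nxt (s n)" for n
      by (simp add: s_def)
    have s: "s n < K" for n
    proof (induction n)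
      case 0
      show ?case
        using \<open>\<alpha>\<^sub>0 < K\<close> by (simp add: s_def)
    next
      case (Suc n)
      then show ?case
        using nxt by (simp add: s_Suc)
    qed
    obtain \<gamma> where "\<gamma> < K" and below: "\<And>n. s n < \<gamma>"
      and cofinal: "\<And>\<alpha>. \<alpha> < \<gamma> \<Longrightarrow> \<exists>n. \<alpha> \<le> s n"
      using countable_sup_below[of s, OF s] by blast
    have "\<gamma> \<in> C j" if "j \<in> J" for j
    proof (rule club_contains_limit[OF clubs[OF that] \<open>\<gamma> < K\<close> below cofinal])
      show "\<exists>c\<in>C j. s n < c \<and> c < s (Suc n)" for n
        using nxt s[of n] \<open>j \<in> J\<close> by (simp add: s_Suc)
    qed
    with \<open>\<gamma> < K\<close> show ?thesis
      by blast
  qed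
qed

lemma stationary_fiber:
  assumes "|g ` seg K| \<le>o |A|"
  shows "\<exists>y. stationary K {x\<in>seg K. g x = y}"
proof (rule ccontr)
  assume "\<not> ?thesis"
  then have "\<forall>y. \<exists>C. club K C \<and> {x\<in>seg K. g x = y} \<inter> C = {}"
    unfolding stationary_def by auto
  from choice[OF this] obtain C where C: "\<forall>y. club K (C y) \<and> {x\<in>seg K. g x = y} \<inter> C y = {}"
    by blast
  obtain \<gamma> where "\<gamma> < K" "\<forall>y\<in>g ` seg K. \<gamma> \<in> C y"
    using club_Inter_nonempty[OF assms, where C = C] C by blast
  then have "\<gamma> \<in> {x\<in>seg K. g x = g \<gamma>} \<inter> C (g \<gamma>)"
    by (simp add: seg_def)
  with C show False
    by blast
qed

end

lemma stationary_product_constant: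
  fixes k :: "nat \<Rightarrow> 'a::wellorder" and A :: "nat \<Rightarrow> 'b set" and q :: "(nat \<Rightarrow> 'a) \<Rightarrow> 'c"
  assumes "\<And>i. i < n \<Longrightarrow> successor_cardinal (k (Suc i)) (A i)"
    and "\<And>i. i < n \<Longrightarrow> |Func (PiE {1..i} (\<lambda>j. seg (k j))) Z| \<le>o |A i|"
    and "q ` PiE {1..n} (\<lambda>i. seg (k i)) \<subseteq> Z"
  shows "\<exists>S. \<exists>c\<in>Z. (\<forall>i\<in>{1..n}. stationary (k i) (S i)) \<and> (\<forall>x\<in>PiE {1..n} S. q x = c)"
  using assms
proof (induction n arbitrary: q)
  case 0
  then show ?case
    by auto
next
  case (Suc n)
  let ?D = "PiE {1..n} (\<lambda>i. seg (k i))"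
  interpret K: successor_cardinal "k (Suc n)" "A n"
    using Suc.prems(1) by simp
  define h where "h \<beta> = restrict (\<lambda>x. q (x(Suc n := \<beta>))) ?D" for \<beta>
  have "q (g(Suc n := \<beta>)) \<in> Z" if "g \<in> ?D" "\<beta> \<in> seg (k (Suc n))" for g \<beta>
  proof -
    have "g(Suc n := \<beta>) \<in> PiE {1..Suc n} (\<lambda>i. seg (k i))"
      using that by (auto simp: PiE_iff extensional_def)
    then show ?thesis
      using Suc.prems(3) by blast
  qed
  then have "h ` seg (k (Suc n)) \<subseteq> Func ?D Z"
    unfolding h_def Func_def by (simp add: image_subset_iff)
  then have "|h ` seg (k (Suc n))| \<le>o |A n|"
    by (rule ordLeq_transitive[OF card_of_mono1 Suc.prems(2)]) simp
  then obtain y where fiber: "stationary (k (Suc n)) {\<beta>\<in>seg (k (Suc n)). h \<beta> = y}"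
    (is "stationary _ ?T") using K.stationary_fiber by blast
  then obtain \<beta> where "\<beta> \<in> ?T"
    using K.stationary_nonempty by blast
  then have "y ` ?D \<subseteq> Z"
    using \<open>h ` seg (k (Suc n)) \<subseteq> Func ?D Z\<close> by (auto simp: Func_def)
  then obtain S c where "c \<in> Z" and S: "\<forall>i\<in>{1..n}. stationary (k i) (S i)"
    and c: "\<forall>x\<in>PiE {1..n} S. y x = c"
    using Suc.IH[of y] Suc.prems(1,2) by force
  let ?S = "S(Suc n := ?T)"
  have "\<forall>i\<in>{1..Suc n}. stationary (k i) (?S i)"
    using S fiber by (auto simp: atLeastAtMostSuc_conv)
  moreover have "q x = c" if x: "x \<in> PiE {1..Suc n} ?S" for x
  proof -
    have "PiE {1..n} ?S = PiE {1..n} S"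
      by (rule PiE_cong) simp
    then have "PiE {1..Suc n} ?S = (\<lambda>(\<beta>, g). g(Suc n := \<beta>)) ` (?T \<times> PiE {1..n} S)"
      by (simp add: atLeastAtMostSuc_conv PiE_insert_eq)
    then obtain \<beta> g where x_eq: "x = g(Suc n := \<beta>)" and "\<beta> \<in> ?T" and g: "g \<in> PiE {1..n} S"
      using x by fastforce
    have "g \<in> ?D"
      using g S PiE_mono[of "{1..n}" S] unfolding stationary_def by blast
    then have "q x = h \<beta> g"
      by (simp add: h_def x_eq)
    also have "\<dots> = c"
      using \<open>\<beta> \<in> ?T\<close> c g by simp
    finally show ?thesis .
  qed
  ultimately show ?case
    using \<open>c \<in> Z\<close> by (intro exI[of _ ?S]) blast
qed

lemma Well_order_le: "Well_order {(x::'a::wellorder, y). x \<le> y}"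
proof -
  have "{(x::'a, y). x \<le> y} - Id = {(x, y). x < y}"
    by auto
  then have "wf ({(x::'a, y). x \<le> y} - Id)"
    using wf by simp
  then show ?thesis
    unfolding well_order_on_def linear_order_on_def partial_order_on_def preorder_on_def
      refl_on_def trans_on_def antisym_on_def total_on_def Field_def
    by auto
qed

lemma ordLess_seg_bij_seg:
  fixes lam :: "'a::wellorder"
  assumes "|F| <o |seg lam|"
  shows "\<exists>a<lam. \<exists>h. bij_betw h (seg a) F"
proof -
  define r where "r = Restr {(x::'a, y). x \<le> y} (seg lam)"
  have r: "Well_order r"
    unfolding r_def by (rule Well_order_Restr[OF Well_order_le])
  have Field_r: "Field r = seg lam"
    by (auto simp: r_def Field_def seg_def)
  have "|F| <o r"
    using ordLess_ordLeq_trans[OF assms card_of_least] r Field_r by simp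
  then obtain a where a: "a \<in> Field r" and "|F| =o Restr r (underS r a)"
    using ordLess_iff_ordIso_Restr[OF r card_of_Well_order] by blast
  moreover have "Field (Restr r (underS r a)) = seg a"
    using a by (auto simp: Field_r r_def Field_def seg_def underS_def)
  ultimately obtain g where "bij_betw g F (seg a)"
    unfolding ordIso_def iso_def by (auto simp: Field_card_of)
  then show ?thesis
    using a Field_r bij_betw_inv_into by (fastforce simp: seg_def)
qed

lemma card_of_small_partial_functions:
  fixes kap lam :: "'a::wellorder"
  assumes inf: "infinite (seg kap)" and "lam \<le> kap"
    and exp: "\<forall>\<nu><lam. |Func (seg \<nu>) (seg kap)| \<le>o |seg kap|"
  shows "|small_partial_functions kap lam| \<le>o |seg kap|"
proof -
  let ?K = "seg kap"
  have cover: "small_partial_functions kap lam \<subseteq>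
      (\<Union>a\<in>seg lam. (\<lambda>h. h ` seg a) ` Func (seg a) (?K \<times> ?K))"
  proof
    fix f assume "f \<in> small_partial_functions kap lam"
    then have "f \<subseteq> ?K \<times> ?K" and "|f| <o |seg lam|"
      unfolding small_partial_functions_def by auto
    moreover obtain a h where "a < lam" "bij_betw h (seg a) f"
      using ordLess_seg_bij_seg[OF \<open>|f| <o |seg lam|\<close>] by blast
    ultimately have h: "restrict h (seg a) \<in> Func (seg a) (?K \<times> ?K)"
      and f: "f = restrict h (seg a) ` seg a"
      by (auto simp: Func_def bij_betw_def)
    show "f \<in> (\<Union>a\<in>seg lam. (\<lambda>h. h ` seg a) ` Func (seg a) (?K \<times> ?K))"
      using \<open>a < lam\<close>
      by (intro UN_I[of a] image_eqI[where f = "\<lambda>h. h ` seg a", OF f h]) (simp add: seg_def)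
  qed
  have "|\<Union>a\<in>seg lam. (\<lambda>h. h ` seg a) ` Func (seg a) (?K \<times> ?K)| \<le>o |?K|"
  proof (rule card_of_UNION_ordLeq_infinite[OF inf])
    show "|seg lam| \<le>o |?K|"
      using \<open>lam \<le> kap\<close> by (intro card_of_mono1) (auto simp: seg_def)
    have "|Func (seg a) (?K \<times> ?K)| \<le>o |Func (seg a) ?K|" for a
      by (rule card_of_Func_ordLeq[OF ordLeq_refl[OF card_of_Card_order]
            ordIso_imp_ordLeq[OF card_of_Times_same_infinite[OF inf]]])
    then show "\<forall>a\<in>seg lam. |(\<lambda>h. h ` seg a) ` Func (seg a) (?K \<times> ?K)| \<le>o |?K|"
      using exp card_of_image ordLeq_transitive by (metis mem_Collect_eq seg_def)
  qed
  with card_of_mono1[OF cover] show ?thesis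
    by (rule ordLeq_transitive)
qed

lemma iterated_successor_cardinals:
  fixes k m :: "nat \<Rightarrow> 'a::wellorder" and Z :: "'c set"
  assumes inf: "infinite (seg (m 0))" and Z: "|Z| \<le>o |seg (m 0)|"
    and succ: "\<And>i. i < d \<Longrightarrow> is_succ_card (k (Suc i)) (m i)"
    and pow: "\<And>i. 0 < i \<Longrightarrow> i < d \<Longrightarrow> |Pow (seg (k i))| \<le>o |seg (m i)|"
    and exp: "\<And>i. 0 < i \<Longrightarrow> i < d \<Longrightarrow> |Func (seg (k i)) (seg (m i))| =o |seg (m i)|"
  shows "\<And>i. i < d \<Longrightarrow> successor_cardinal (k (Suc i)) (seg (m i))"
    and "\<And>i. i < d \<Longrightarrow> |Func (PiE {1..i} (\<lambda>j. seg (k j))) Z| \<le>o |seg (m i)|"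
proof -
  have m_k: "|seg (m i)| \<le>o |seg (k (Suc i))|" if "i < d" for i
    by (rule ordLess_imp_ordLeq[OF is_succ_card_seg_ordLess[OF succ[OF that]]])
  have k_m: "|seg (k i)| \<le>o |seg (m i)|" if "0 < i" "i < d" for i
    by (rule ordLeq_transitive[OF ordLess_imp_ordLeq[OF card_of_Pow] pow[OF that]])
  have m_mono: "|seg (m i)| \<le>o |seg (m j)|" if "i \<le> j" "j < d" for i j
  proof (rule card_of_ordLeq_chain[where X = "\<lambda>l. seg (m l)", OF _ \<open>i \<le> j\<close>])
    show "|seg (m l)| \<le>o |seg (m (Suc l))|" if "i \<le> l" "l < j" for l
      by (rule ordLeq_transitive[OF m_k k_m]) (use that \<open>j < d\<close> in auto)
  qed
  have k_mono: "|seg (k i)| \<le>o |seg (k j)|" if "0 < i" "i \<le> j" "j \<le> d" for i j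
  proof (rule card_of_ordLeq_chain[where X = "\<lambda>l. seg (k l)", OF _ \<open>i \<le> j\<close>])
    show "|seg (k l)| \<le>o |seg (k (Suc l))|" if "i \<le> l" "l < j" for l
      by (rule ordLeq_transitive[OF k_m m_k]) (use that \<open>0 < i\<close> \<open>j \<le> d\<close> in auto)
  qed
  have m_inf: "infinite (seg (m i))" if "i < d" for i
    by (rule card_of_ordLeq_infinite[OF m_mono[OF _ that] inf]) simp
  have k_inf: "infinite (seg (k i))" if "0 < i" "i \<le> d" for i
    using card_of_ordLeq_infinite[OF m_k m_inf, of "i - 1"] that by simp
  show "successor_cardinal (k (Suc i)) (seg (m i))" if "i < d" for i
    using succ[OF that] m_inf[OF that] by unfold_locales (simp_all add: is_succ_card_def)
  show "|Func (PiE {1..i} (\<lambda>j. seg (k j))) Z| \<le>o |seg (m i)|" if "i < d" for i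
  proof (cases "i = 0")
    case True
    then show ?thesis
      using ordIso_ordLeq_trans[OF card_of_Func_singleton_dom Z] by simp
  next
    case False
    have "|PiE {1..i} (\<lambda>j. seg (k j))| \<le>o |seg (k i)|"
      by (rule card_of_PiE_ordLeq_infinite[OF _ k_inf]) (use False k_mono that in auto)
    moreover have "|Z| \<le>o |seg (m i)|"
      by (rule ordLeq_transitive[OF Z m_mono[OF _ that]]) simp
    moreover have "PiE {1..i} (\<lambda>j. seg (k j)) \<noteq> {}"
      unfolding PiE_eq_empty_iff
    proof
      assume "\<exists>j\<in>{1..i}. seg (k j) = {}"
      then obtain j where "j \<in> {1..i}" "seg (k j) = {}" ..
      then show False
        using k_inf[of j] that by simp
    qed
    ultimately have "|Func (PiE {1..i} (\<lambda>j. seg (k j))) Z| \<le>o |Func (seg (k i)) (seg (m i))|"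
      by (intro card_of_Func_ordLeq) simp_all
    then show ?thesis
      by (rule ordLeq_ordIso_trans[OF _ exp]) (use False that in simp_all)
  qed
qed

theorem mainTheorem4:
  fixes kap lam :: "'a::wellorder"
    and d :: nat
    and k :: "nat \<Rightarrow> 'a"
    and p :: "(nat \<Rightarrow> 'a) \<Rightarrow> ('a \<times> 'a) set"
  assumes "is_cardinal kap" and "infinite (seg kap)"
    and "is_cardinal lam" and "infinite (seg lam)"
    and "lam \<le> kap"
    and "\<forall>\<nu><lam. (card_of (Func (seg \<nu>) (seg kap)), card_of (seg kap)) \<in> ordLeq"
    and "d \<ge> 1"
    and "is_succ_card (k 1) kap"
    and "\<forall>i\<in>{1..<d}. \<exists>mu. is_cardinal mu
            \<and> (card_of (Pow (seg (k i))), card_of (seg mu)) \<in> ordLeq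
            \<and> is_succ_card (k (Suc i)) mu
            \<and> (card_of (Func (seg (k i)) (seg mu)), card_of (seg mu)) \<in> ordIso"
    and "\<forall>x\<in>PiE {1..d} (\<lambda>i. seg (k i)). p x \<in> small_partial_functions kap lam"
  shows "\<exists>S. (\<forall>i\<in>{1..d}. stationary (k i) (S i))
             \<and> single_valued (\<Union> (p ` PiE {1..d} S))"
proof -
  obtain mu where mu: "\<forall>i\<in>{1..<d}. |Pow (seg (k i))| \<le>o |seg (mu i)|
      \<and> is_succ_card (k (Suc i)) (mu i) \<and> |Func (seg (k i)) (seg (mu i))| =o |seg (mu i)|"
    using bchoice[OF assms(9)] by blast
  define m where "m i = (if i = 0 then kap else mu i)" for i
  define Z where "Z = small_partial_functions kap lam"
  have inf: "infinite (seg (m 0))" and card_Z: "|Z| \<le>o |seg (m 0)|"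
    unfolding Z_def m_def by (simp_all add: card_of_small_partial_functions assms(2,5,6))
  have succ: "is_succ_card (k (Suc i)) (m i)" if "i < d" for i
    using assms(8) mu that by (cases "i = 0") (simp_all add: m_def)
  have pow: "|Pow (seg (k i))| \<le>o |seg (m i)|"
    and exp: "|Func (seg (k i)) (seg (m i))| =o |seg (m i)|" if "0 < i" "i < d" for i
    using mu that by (simp_all add: m_def)
  have "\<exists>S. \<exists>c\<in>Z. (\<forall>i\<in>{1..d}. stationary (k i) (S i)) \<and> (\<forall>x\<in>PiE {1..d} S. p x = c)"
  proof (rule stationary_product_constant[where A = "\<lambda>i. seg (m i)"])
    show "successor_cardinal (k (Suc i)) (seg (m i))" if "i < d" for i
      by (rule iterated_successor_cardinals(1)) (fact inf card_Z succ pow exp that)+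
    show "|Func (PiE {1..i} (\<lambda>j. seg (k j))) Z| \<le>o |seg (m i)|" if "i < d" for i
      by (rule iterated_successor_cardinals(2)) (fact inf card_Z succ pow exp that)+
    show "p ` PiE {1..d} (\<lambda>i. seg (k i)) \<subseteq> Z"
      using assms(10) unfolding Z_def by blast
  qed
  then obtain S c where "c \<in> Z" and S: "\<forall>i\<in>{1..d}. stationary (k i) (S i)"
    and "\<forall>x\<in>PiE {1..d} S. p x = c"
    by blast
  then have "\<Union> (p ` PiE {1..d} S) \<subseteq> c" and "single_valued c"
    by (auto simp: Z_def small_partial_functions_def)
  then have "single_valued (\<Union> (p ` PiE {1..d} S))"
    by (rule single_valued_subset)
  with S show ?thesis
    by blast
qed

end
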